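(* Let $n,d,r,k$ be positive integers with $n\geq\mathrm{R}\big(2d,\,r+2d-1,\,2^{k2^{2d^2+d}}\big)$. Then for every collection $\boldsymbol\lambda=\langle\lambda_F: F\in\binom{\binom{[n]}{\leq 2}}{\leq d}\rangle$ of elements of $\mathbb{Z}_{2^k}$ there exists $X\subseteq[n]$ with $|X|=r$ such that $\boldsymbol\lambda$ is canonical in $X$.
   Context: For a set $S$ and integer $j\geq 1$, $\binom{S}{\leq j}$ denotes the set of nonempty subsets of $S$ with at most $j$ elements, and $\binom{S}{j}$ those with exactly $j$ elements. $\mathbb{Z}_{2^k}=\mathbb{Z}/2^k\mathbb{Z}$. Ramsey numbers: for positive integers $\ell\leq m$ and $c$, $\mathrm{R}(\ell,m,c)$ is the least positive integer $N$ such that for every $n\geq N$ and every colouring $\chi\colon\binom{[n]}{\ell}\to[c]$ there is $X\in\binom{[n]}{m}$ with $\chi$ constant on $\binom{X}{\ell}$. Type: for a nonempty set $F$ of nonempty subsets of $[n]$, write $\bigcup F=\{u_1<\dots<u_\ell\}$ and set $\tau(F)=\{S\subseteq[\ell]: \{u_i: i\in S\}\in F\}$. Canonical: a collection $\boldsymbol\lambda=\langle\lambda_F: F\in\binom{\binom{[n]}{\leq 2}}{\leq d}\rangle$ is canonical in a nonempty $X\subseteq[n]$ if $\lambda_{F_1}=\lambda_{F_2}$ whenever $F_1,F_2\in\binom{\binom{X}{\leq 2}}{\leq d}$ satisfy $\tau(F_1)=\tau(F_2)$. *)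

theory Defs
  imports Main
begin

definition binom_le :: "'a set \<Rightarrow> nat \<Rightarrow> 'a set set" where
  "binom_le S j = {A. A \<subseteq> S \<and> A \<noteq> {} \<and> finite A \<and> card A \<le> j}"

definition binom_eq :: "'a set \<Rightarrow> nat \<Rightarrow> 'a set set" where
  "binom_eq S j = {A. A \<subseteq> S \<and> finite A \<and> card A = j}"

definition ramsey_prop :: "nat \<Rightarrow> nat \<Rightarrow> nat \<Rightarrow> nat \<Rightarrow> bool" where
  "ramsey_prop l m c N \<longleftrightarrow>
     (\<forall>n\<ge>N. \<forall>\<chi> :: nat set \<Rightarrow> nat.
        (\<forall>e \<in> binom_eq {1..n} l. \<chi> e \<in> {1..c}) \<longrightarrow>
        (\<exists>X \<in> binom_eq {1..n} m. \<exists>col. \<forall>e \<in> binom_eq X l. \<chi> e = col))"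

definition ramsey_num :: "nat \<Rightarrow> nat \<Rightarrow> nat \<Rightarrow> nat" where
  "ramsey_num l m c = (LEAST N. N > 0 \<and> ramsey_prop l m c N)"

text \<open>The type of a family F of subsets of nat: with \<Union>F = {u_1 < ... < u_l},
  tau F = {S \<subseteq> [l]. {u_i | i \<in> S} \<in> F}.\<close>
definition tau :: "nat set set \<Rightarrow> nat set set" where
  "tau F = {S. S \<subseteq> {1..card (\<Union>F)} \<and>
               (\<lambda>i. sorted_list_of_set (\<Union>F) ! (i - 1)) ` S \<in> F}"

definition canonical :: "nat \<Rightarrow> (nat set set \<Rightarrow> 'b) \<Rightarrow> nat set \<Rightarrow> bool" where
  "canonical d lam X \<longleftrightarrow> X \<noteq> {} \<and>
     (\<forall>F1 \<in> binom_le (binom_le X 2) d. \<forall>F2 \<in> binom_le (binom_le X 2) d.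
        tau F1 = tau F2 \<longrightarrow> lam F1 = lam F2)"

end

(*
  Colour each 2d-subset Y of a set Z by the table T \<mapsto> \<lambda>(T placed on Y), where T ranges over
  the types inside {1..2d}, i.e. the 2^(2d^2+d) families of nonempty subsets of size at most 2 of
  {1..2d}; the family of type T placed on Y is obtained by replacing i by the i-th smallest element
  of Y. There are at most (2^k)^(2^(2d^2+d)) colours, so Ramsey's theorem gives Z of size r+2d-1 on
  whose 2d-subsets the table is constant. Let X consist of the r smallest elements of Z. For a
  family F on X, the set \<Union>F has at most 2d elements; padding it with elements of Z above X gives
  a 2d-subset Y of Z in which \<Union>F is an initial segment, so F is the family of type tau F placed
  on Y. Hence \<lambda>_F only depends on tau F.
*)
theory Submission
  imports Defs "HOL-Library.Ramsey"
begin

lemma binom_eq_eq_nsets: "binom_eq = nsets"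
  by (simp add: fun_eq_iff binom_eq_def nsets_def)

lemma partn_lst_inj_image:
  assumes "partn_lst A \<alpha> \<gamma>" and "inj_on g A"
  shows "partn_lst (g ` A) \<alpha> \<gamma>"
  unfolding partn_lst_def monochromatic_def
proof
  fix f assume f: "f \<in> [g ` A]\<^bsup>\<gamma>\<^esup> \<rightarrow> {..<length \<alpha>}"
  have fg: "f \<circ> (\<lambda>X. g ` X) \<in> [A]\<^bsup>\<gamma>\<^esup> \<rightarrow> {..<length \<alpha>}"
    using f _ assms(2) by (rule nsets_compose_image_funcset) auto
  obtain i H where i: "i < length \<alpha>" and H: "H \<in> [A]\<^bsup>(\<alpha> ! i)\<^esup>"
    and H_monochromatic: "(f \<circ> (\<lambda>X. g ` X)) ` [H]\<^bsup>\<gamma>\<^esup> \<subseteq> {i}"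
    using partn_lstE[OF assms(1) fg] by auto
  have inj_H: "inj_on g H"
    using H assms(2) by (auto simp: nsets_def intro: inj_on_subset)
  have "g ` H \<in> [g ` A]\<^bsup>(\<alpha> ! i)\<^esup>"
    using H inj_H by (auto simp: nsets_def card_image)
  moreover have "f ` [g ` H]\<^bsup>\<gamma>\<^esup> \<subseteq> {i}"
  proof
    fix y assume "y \<in> f ` [g ` H]\<^bsup>\<gamma>\<^esup>"
    then obtain X where X: "X \<in> [g ` H]\<^bsup>\<gamma>\<^esup>" and y: "y = f X" by blast
    obtain Y where "Y \<in> [H]\<^bsup>\<gamma>\<^esup>" and "X = g ` Y"
      using X inj_H by (rule nset_image_obtains)
    then show "y \<in> {i}" using H_monochromatic y by auto
  qed
  ultimately show "\<exists>i<length \<alpha>. \<exists>H\<in>[g ` A]\<^bsup>(\<alpha> ! i)\<^esup>. f ` [H]\<^bsup>\<gamma>\<^esup> \<subseteq> {i}"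
    using i by blast
qed

lemma ramsey_prop_if_partn_lst:
  assumes "\<And>n. N \<le> n \<Longrightarrow> partn_lst {1..n} (replicate c m) l"
  shows "ramsey_prop l m c N"
  unfolding ramsey_prop_def binom_eq_eq_nsets
proof (intro allI impI)
  fix n and \<chi> :: "nat set \<Rightarrow> nat"
  assume "N \<le> n" and \<chi>: "\<forall>e \<in> [{1..n}]\<^bsup>l\<^esup>. \<chi> e \<in> {1..c}"
  have \<chi>': "(\<lambda>e. \<chi> e - 1) \<in> [{1..n}]\<^bsup>l\<^esup> \<rightarrow> {..<length (replicate c m)}"
    using \<chi> by fastforce
  obtain i H where "i < length (replicate c m)" and "H \<in> [{1..n}]\<^bsup>(replicate c m ! i)\<^esup>"
    and H_monochromatic: "(\<lambda>e. \<chi> e - 1) ` [H]\<^bsup>l\<^esup> \<subseteq> {i}"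
    using partn_lstE[OF assms[OF \<open>N \<le> n\<close>] \<chi>'] by auto
  moreover have "\<forall>e \<in> [H]\<^bsup>l\<^esup>. \<chi> e = Suc i"
  proof
    fix e assume e: "e \<in> [H]\<^bsup>l\<^esup>"
    then have "e \<in> [{1..n}]\<^bsup>l\<^esup>"
      using \<open>H \<in> _\<close> by (auto simp: nsets_def)
    then show "\<chi> e = Suc i" using \<chi> H_monochromatic e by fastforce
  qed
  ultimately show "\<exists>X \<in> [{1..n}]\<^bsup>m\<^esup>. \<exists>col. \<forall>e \<in> [X]\<^bsup>l\<^esup>. \<chi> e = col"
    by auto
qed

lemma ramsey_prop_ramsey_num: "ramsey_prop l m c (ramsey_num l m c)"
proof -
  obtain N :: nat where N: "partn_lst {..<N} (replicate c m) l"
    using ramsey_full[of "replicate c m" l] by blast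
  have "ramsey_prop l m c (Suc N)"
  proof (rule ramsey_prop_if_partn_lst)
    fix n assume "Suc N \<le> n"
    then have "partn_lst {..<n} (replicate c m) l"
      using N partn_lst_greater_resource by fastforce
    then have "partn_lst (Suc ` {..<n}) (replicate c m) l"
      by (rule partn_lst_inj_image) simp
    moreover have "Suc ` {..<n} = {1..n}"
      by (simp add: lessThan_atLeast0 atLeastLessThanSuc_atLeastAtMost)
    ultimately show "partn_lst {1..n} (replicate c m) l" by simp
  qed
  then show ?thesis
    using LeastI[of "\<lambda>N. 0 < N \<and> ramsey_prop l m c N" "Suc N"] by (simp add: ramsey_num_def)
qed

lemma ramsey_num_homogeneous:
  assumes "ramsey_num l m c \<le> n" and "finite C" and "card C \<le> c"
    and "\<chi> \<in> [{1..n}]\<^bsup>l\<^esup> \<rightarrow> C"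
  shows "\<exists>X \<in> [{1..n}]\<^bsup>m\<^esup>. \<exists>col. \<forall>e \<in> [X]\<^bsup>l\<^esup>. \<chi> e = col"
proof -
  obtain h where h: "inj_on h C" "h ` C \<subseteq> {1..c}"
    using assms(2,3) card_le_inj[of C "{1..c}"] by auto
  have "\<forall>e \<in> [{1..n}]\<^bsup>l\<^esup>. h (\<chi> e) \<in> {1..c}"
    using assms(4) h(2) by blast
  then obtain X col where "X \<in> [{1..n}]\<^bsup>m\<^esup>" and "\<forall>e \<in> [X]\<^bsup>l\<^esup>. h (\<chi> e) = col"
    using ramsey_prop_ramsey_num[of l m c, unfolded ramsey_prop_def binom_eq_eq_nsets, rule_format,
        OF assms(1), of "\<lambda>e. h (\<chi> e)"] by blast
  moreover have "[X]\<^bsup>l\<^esup> \<subseteq> [{1..n}]\<^bsup>l\<^esup>"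
    using \<open>X \<in> _\<close> by (auto simp: nsets_def)
  ultimately have "\<forall>e \<in> [X]\<^bsup>l\<^esup>. \<forall>e' \<in> [X]\<^bsup>l\<^esup>. \<chi> e = \<chi> e'"
    using h(1) assms(4) by (metis PiE inj_on_contraD subsetD)
  then show ?thesis
    using \<open>X \<in> _\<close> by blast
qed

lemma binom_le_eq_Union_nsets: "binom_le S j = (\<Union>i\<in>{1..j}. [S]\<^bsup>i\<^esup>)"
  by (auto simp: binom_le_def nsets_def Suc_le_eq card_gt_0_iff)

lemma card_binom_le:
  assumes "finite S"
  shows "card (binom_le S j) = (\<Sum>i=1..j. card S choose i)"
proof -
  have "card (\<Union>i\<in>{1..j}. [S]\<^bsup>i\<^esup>) = (\<Sum>i=1..j. card ([S]\<^bsup>i\<^esup>))"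
    using assms by (intro card_UN_disjoint) (auto simp: finite_imp_finite_nsets nsets_def)
  then show ?thesis
    by (simp add: binom_le_eq_Union_nsets)
qed

lemma card_binom_le_two:
  assumes "finite S"
  shows "card (binom_le S 2) = card S + (card S choose 2)"
  using assms by (simp add: card_binom_le numeral_2_eq_2)

lemma card_binom_le_two_interval: "card (binom_le {1..2 * d} 2) = 2 * d\<^sup>2 + d"
proof -
  have choose: "2 * d choose 2 = d * (2 * d - 1)"
    by (simp add: choose_two)
  have "card (binom_le {1..2 * d} 2) = 2 * d + (2 * d choose 2)"
    by (simp add: card_binom_le_two)
  also have "\<dots> = 2 * d\<^sup>2 + d"
    using choose by (cases d) (simp_all add: power2_eq_square algebra_simps)
  finally show ?thesis .
qed

lemma finite_binom_le: "finite S \<Longrightarrow> finite (binom_le S j)"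
  by (rule finite_subset[of _ "Pow S"]) (auto simp: binom_le_def)

lemma binom_le_mono: "S \<subseteq> T \<Longrightarrow> binom_le S j \<subseteq> binom_le T j"
  by (auto simp: binom_le_def)

lemma canonical_cong:
  assumes "canonical d f X" and "\<And>F. F \<in> binom_le (binom_le X 2) d \<Longrightarrow> g F = f F"
  shows "canonical d g X"
  using assms unfolding canonical_def by metis

definition elem_at :: "nat set \<Rightarrow> nat \<Rightarrow> nat" where
  "elem_at Y i = sorted_list_of_set Y ! (i - 1)"

definition realise_type :: "nat set \<Rightarrow> nat set set \<Rightarrow> nat set set" where
  "realise_type Y T = (\<lambda>S. elem_at Y ` S) ` T"

definition initial_segment :: "'a::linorder set \<Rightarrow> 'a set \<Rightarrow> bool" where
  "initial_segment U Y \<longleftrightarrow> U \<subseteq> Y \<and> (\<forall>u\<in>U. \<forall>y\<in>Y - U. u < y)"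

definition type_homogeneous :: "nat \<Rightarrow> (nat set set \<Rightarrow> 'b) \<Rightarrow> nat set \<Rightarrow> bool" where
  "type_homogeneous d f Z \<longleftrightarrow>
     (\<forall>Y \<in> [Z]\<^bsup>(2 * d)\<^esup>. \<forall>Y' \<in> [Z]\<^bsup>(2 * d)\<^esup>. \<forall>T \<subseteq> binom_le {1..2 * d} 2.
        f (realise_type Y T) = f (realise_type Y' T))"

lemma tau_eq_elem_at: "tau F = {S. S \<subseteq> {1..card (\<Union>F)} \<and> elem_at (\<Union>F) ` S \<in> F}"
  by (simp add: tau_def elem_at_def[abs_def])

lemma bij_betw_elem_at:
  assumes "finite U"
  shows "bij_betw (elem_at U) {1..card U} U"
proof -
  have "bij_betw (\<lambda>i. i - 1) {1..card U} {..<card U}"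
    by (rule bij_betwI[where g = Suc]) auto
  moreover have "bij_betw ((!) (sorted_list_of_set U)) {..<card U} U"
    using assms by (intro bij_betw_nth) auto
  ultimately have "bij_betw ((!) (sorted_list_of_set U) \<circ> (\<lambda>i. i - 1)) {1..card U} U"
    by (rule bij_betw_trans)
  then show ?thesis
    by (simp add: comp_def elem_at_def[abs_def])
qed

lemma sorted_list_of_set_Un_less:
  fixes A B :: "'a::linorder set"
  assumes "finite A" "finite B" "\<forall>a\<in>A. \<forall>b\<in>B. a < b"
  shows "sorted_list_of_set (A \<union> B) = sorted_list_of_set A @ sorted_list_of_set B"
proof -
  let ?xs = "sorted_list_of_set A @ sorted_list_of_set B"
  have "sorted ?xs" and "distinct ?xs"
    using assms by (auto simp: sorted_append less_imp_le)
  then have "sorted_list_of_set (set ?xs) = ?xs"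
    by (rule sorted_list_of_set.idem_if_sorted_distinct)
  then show ?thesis
    using assms by simp
qed

lemma elem_at_initial_segment:
  assumes "finite Y" and "initial_segment U Y" and "i \<in> {1..card U}"
  shows "elem_at Y i = elem_at U i"
proof -
  have "finite U" and "Y = U \<union> (Y - U)"
    using assms(1,2) by (auto simp: initial_segment_def intro: finite_subset)
  then have "sorted_list_of_set Y = sorted_list_of_set U @ sorted_list_of_set (Y - U)"
    using assms(1,2) by (metis sorted_list_of_set_Un_less finite_Diff initial_segment_def)
  then show ?thesis
    using assms(3) \<open>finite U\<close> by (auto simp: elem_at_def nth_append)
qed

lemma realise_type_tau:
  assumes "finite (\<Union>F)"
  shows "realise_type (\<Union>F) (tau F) = F"
proof -
  define U where "U = \<Union>F"
  have image: "elem_at U ` {1..card U} = U"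
    using bij_betw_elem_at[OF assms] by (simp add: bij_betw_def U_def)
  have "E \<in> realise_type U (tau F)" if "E \<in> F" for E
  proof -
    have "E \<subseteq> elem_at U ` {1..card U}"
      using that image by (auto simp: U_def)
    then have "elem_at U ` {i \<in> {1..card U}. elem_at U i \<in> E} = E"
      by fastforce
    then show ?thesis
      using that unfolding realise_type_def tau_eq_elem_at U_def[symmetric]
      by (intro image_eqI[where x = "{i \<in> {1..card U}. elem_at U i \<in> E}"]) auto
  qed
  moreover have "realise_type U (tau F) \<subseteq> F"
    by (auto simp: realise_type_def tau_eq_elem_at U_def)
  ultimately show ?thesis
    unfolding U_def by blast
qed

lemma realise_type_tau_initial_segment:
  assumes "finite Y" and "initial_segment (\<Union>F) Y"
  shows "realise_type Y (tau F) = F"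
proof -
  have "finite (\<Union>F)"
    using assms by (auto simp: initial_segment_def intro: finite_subset)
  have "elem_at Y ` S = elem_at (\<Union>F) ` S" if "S \<in> tau F" for S
  proof (rule image_cong[OF refl])
    fix i assume "i \<in> S"
    then have "i \<in> {1..card (\<Union>F)}"
      using that by (auto simp: tau_eq_elem_at)
    then show "elem_at Y i = elem_at (\<Union>F) i"
      by (rule elem_at_initial_segment[OF assms])
  qed
  then have "realise_type Y (tau F) = realise_type (\<Union>F) (tau F)"
    by (simp add: realise_type_def)
  also have "\<dots> = F"
    using \<open>finite (\<Union>F)\<close> by (rule realise_type_tau)
  finally show ?thesis .
qed

lemma tau_subset_binom_le:
  assumes "finite (\<Union>F)" and "F \<subseteq> binom_le X j"
  shows "tau F \<subseteq> binom_le {1..card (\<Union>F)} j"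
proof
  fix S assume "S \<in> tau F"
  then have S: "S \<subseteq> {1..card (\<Union>F)}" and "elem_at (\<Union>F) ` S \<in> binom_le X j"
    using assms(2) by (auto simp: tau_eq_elem_at)
  moreover have "inj_on (elem_at (\<Union>F)) S"
    using bij_betw_elem_at[OF assms(1)] S by (auto simp: bij_betw_def intro: inj_on_subset)
  ultimately show "S \<in> binom_le {1..card (\<Union>F)} j"
    by (auto simp: binom_le_def card_image intro: finite_subset)
qed

lemma Union_binom_le:
  assumes "F \<in> binom_le (binom_le X j) d"
  shows "finite (\<Union>F)" and "0 < card (\<Union>F)" and "card (\<Union>F) \<le> j * d"
proof -
  have F: "finite F" "F \<noteq> {}" "card F \<le> d"
    and E: "\<And>E. E \<in> F \<Longrightarrow> finite E \<and> E \<noteq> {} \<and> card E \<le> j"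
    using assms by (auto simp: binom_le_def)
  then show "finite (\<Union>F)"
    by blast
  then show "0 < card (\<Union>F)"
    using F E by (auto simp: card_gt_0_iff)
  have "card (\<Union>F) \<le> (\<Sum>E\<in>F. card E)"
    by (rule card_Union_le_sum_card)
  also have "\<dots> \<le> card F * j"
    using E sum_bounded_above[of F card j] by simp
  also have "\<dots> \<le> j * d"
    using F by simp
  finally show "card (\<Union>F) \<le> j * d" .
qed

lemma exists_initial_segment_card:
  fixes Z :: "'a::linorder set"
  assumes "finite Z" and "r \<le> card Z"
  shows "\<exists>X. initial_segment X Z \<and> card X = r"
proof -
  define xs where "xs = sorted_list_of_set Z"
  have xs: "distinct xs" "sorted_wrt (<) xs" "set xs = Z" "length xs = card Z"
    using assms(1) by (simp_all add: xs_def)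
  have "set (take r xs) \<union> set (drop r xs) = Z"
    using xs(3) by (metis set_append append_take_drop_id)
  moreover have "set (take r xs) \<inter> set (drop r xs) = {}"
    using xs(1) by (metis distinct_append append_take_drop_id)
  moreover have "\<forall>x\<in>set (take r xs). \<forall>y\<in>set (drop r xs). x < y"
    using xs(2) by (metis sorted_wrt_append append_take_drop_id)
  ultimately have "initial_segment (set (take r xs)) Z"
    unfolding initial_segment_def by blast
  moreover have "card (set (take r xs)) = r"
    using xs assms(2) by (simp add: distinct_card)
  ultimately show ?thesis
    by blast
qed

lemma exists_initial_segment_extension:
  fixes U W :: "'a::linorder set"
  assumes "finite U" "finite W" "\<forall>u\<in>U. \<forall>w\<in>W. u < w"
    and "card U \<le> t" "t \<le> card U + card W"
  shows "\<exists>Y \<subseteq> U \<union> W. card Y = t \<and> initial_segment U Y"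
proof -
  have "t - card U \<le> card W"
    using assms(5) by simp
  then obtain E where E: "E \<subseteq> W" "card E = t - card U" "finite E"
    by (rule obtain_subset_with_card_n)
  have "U \<inter> E = {}"
    using assms(3) E(1) by fastforce
  then have "card (U \<union> E) = t"
    using assms(1,4) E by (simp add: card_Un_disjoint)
  moreover have "initial_segment U (U \<union> E)"
    using assms(3) E(1) by (auto simp: initial_segment_def)
  ultimately show ?thesis
    using E(1) by blast
qed

lemma type_homogeneous_subset_exists:
  fixes f :: "nat set set \<Rightarrow> nat"
  assumes "ramsey_num (2 * d) m (q ^ 2 ^ (2 * d\<^sup>2 + d)) \<le> n" and "\<And>F. f F < q"
  shows "\<exists>Z \<in> [{1..n}]\<^bsup>m\<^esup>. type_homogeneous d f Z"
proof -
  define B where "B = binom_le {1..2 * d} 2"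
  define C where "C = Pow B \<rightarrow>\<^sub>E {..<q}"
  define \<chi> where "\<chi> Y = (\<lambda>T \<in> Pow B. f (realise_type Y T))" for Y
  have "finite B" and "card B = 2 * d\<^sup>2 + d"
    unfolding B_def by (simp add: finite_binom_le, rule card_binom_le_two_interval)
  then have "finite C" and "card C \<le> q ^ 2 ^ (2 * d\<^sup>2 + d)"
    by (simp_all add: C_def finite_PiE card_PiE card_Pow)
  moreover have "\<chi> \<in> [{1..n}]\<^bsup>(2 * d)\<^esup> \<rightarrow> C"
    using assms(2) by (simp add: \<chi>_def C_def)
  ultimately obtain Z col where Z: "Z \<in> [{1..n}]\<^bsup>m\<^esup>"
    and col: "\<forall>Y \<in> [Z]\<^bsup>(2 * d)\<^esup>. \<chi> Y = col"
    using ramsey_num_homogeneous[OF assms(1)] by blast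
  have "f (realise_type Y T) = f (realise_type Y' T)"
    if "Y \<in> [Z]\<^bsup>(2 * d)\<^esup>" "Y' \<in> [Z]\<^bsup>(2 * d)\<^esup>" "T \<subseteq> B" for Y Y' T
  proof -
    have "f (realise_type Y T) = \<chi> Y T"
      using that(3) by (simp add: \<chi>_def)
    also have "\<dots> = \<chi> Y' T"
      using col that(1,2) by simp
    also have "\<dots> = f (realise_type Y' T)"
      using that(3) by (simp add: \<chi>_def)
    finally show ?thesis .
  qed
  then show ?thesis
    using Z unfolding type_homogeneous_def B_def by blast
qed

lemma canonical_subset_if_type_homogeneous:
  assumes "finite Z" "0 < r" "0 < d" "r + 2 * d - 1 \<le> card Z"
    and "type_homogeneous d f Z"
  shows "\<exists>X \<subseteq> Z. card X = r \<and> canonical d f X"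
proof -
  have "r \<le> card Z"
    using assms(3,4) by linarith
  then obtain X where X: "initial_segment X Z" "card X = r"
    using exists_initial_segment_card[OF assms(1)] by blast
  define W where "W = Z - X"
  have W: "finite W" "2 * d - 1 \<le> card W" "\<forall>x\<in>X. \<forall>w\<in>W. x < w"
    using X assms(1,4) by (auto simp: W_def initial_segment_def card_Diff_subset finite_subset)
  have realise: "\<exists>Y \<in> [Z]\<^bsup>(2 * d)\<^esup>. realise_type Y (tau F) = F \<and> tau F \<subseteq> binom_le {1..2 * d} 2"
    if F: "F \<in> binom_le (binom_le X 2) d" for F
  proof -
    have U: "finite (\<Union>F)" "0 < card (\<Union>F)" "card (\<Union>F) \<le> 2 * d"
      using Union_binom_le[OF F] by auto
    have "\<Union>F \<subseteq> X"
      using F by (auto simp: binom_le_def)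
    moreover have "2 * d \<le> card (\<Union>F) + card W"
      using U(2) W(2) by linarith
    ultimately obtain Y where Y: "Y \<subseteq> \<Union>F \<union> W" "card Y = 2 * d" "initial_segment (\<Union>F) Y"
      using exists_initial_segment_extension[of "\<Union>F" W "2 * d"] U W by blast
    have "Y \<subseteq> Z"
      using Y(1) \<open>\<Union>F \<subseteq> X\<close> X(1) by (auto simp: W_def initial_segment_def)
    then have "Y \<in> [Z]\<^bsup>(2 * d)\<^esup>" and "finite Y"
      using Y(2) assms(1) by (auto simp: nsets_def finite_subset)
    moreover have "tau F \<subseteq> binom_le {1..card (\<Union>F)} 2"
      using F by (intro tau_subset_binom_le[OF U(1)]) (auto simp: binom_le_def)
    moreover have "binom_le {1..card (\<Union>F)} 2 \<subseteq> binom_le {1..2 * d} 2"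
      using U(3) by (intro binom_le_mono) auto
    ultimately show ?thesis
      using realise_type_tau_initial_segment Y(3) by blast
  qed
  have "canonical d f X"
    unfolding canonical_def
  proof (intro conjI ballI impI)
    show "X \<noteq> {}"
      using X(2) assms(2) by auto
  next
    fix F1 F2
    assume "F1 \<in> binom_le (binom_le X 2) d" "F2 \<in> binom_le (binom_le X 2) d" and "tau F1 = tau F2"
    then obtain Y1 Y2 where "Y1 \<in> [Z]\<^bsup>(2 * d)\<^esup>" "Y2 \<in> [Z]\<^bsup>(2 * d)\<^esup>" "tau F1 \<subseteq> binom_le {1..2 * d} 2"
      and "realise_type Y1 (tau F1) = F1" "realise_type Y2 (tau F1) = F2"
      using realise by metis
    then show "f F1 = f F2"
      using assms(5) unfolding type_homogeneous_def by metis
  qed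
  then show ?thesis
    using X by (auto simp: initial_segment_def)
qed

theorem corollary5p9:
  fixes n d r k :: nat and lam :: "nat set set \<Rightarrow> nat"
  assumes "n > 0" "d > 0" "r > 0" "k > 0"
    and "n \<ge> ramsey_num (2 * d) (r + 2 * d - 1) (2 ^ (k * 2 ^ (2 * d\<^sup>2 + d)))"
    and "\<forall>F \<in> binom_le (binom_le {1..n} 2) d. lam F < 2 ^ k"
  shows "\<exists>X \<subseteq> {1..n}. card X = r \<and> canonical d lam X"
proof -
  \<comment> \<open>Reducing mod 2^k bounds the colouring also on families with more than d members.\<close>
  define f where "f F = lam F mod 2 ^ k" for F
  obtain Z where Z: "Z \<in> [{1..n}]\<^bsup>(r + 2 * d - 1)\<^esup>" "type_homogeneous d f Z"
    using type_homogeneous_subset_exists[of d "r + 2 * d - 1" "2 ^ k" n f] assms(5)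
    by (auto simp: f_def power_mult)
  then have "finite Z" "r + 2 * d - 1 \<le> card Z" "Z \<subseteq> {1..n}"
    by (auto simp: nsets_def)
  then obtain X where X: "X \<subseteq> {1..n}" "card X = r" "canonical d f X"
    using canonical_subset_if_type_homogeneous[OF _ assms(3,2) _ Z(2)] by blast
  have "lam F = f F" if "F \<in> binom_le (binom_le X 2) d" for F
  proof -
    have "F \<in> binom_le (binom_le {1..n} 2) d"
      using that binom_le_mono[OF binom_le_mono[OF X(1)]] by blast
    then show ?thesis
      using assms(6) by (simp add: f_def)
  qed
  then have "canonical d lam X"
    by (rule canonical_cong[OF X(3)])
  with X(1,2) show ?thesis
    by blast
qed

end
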